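(* Let $(X,\eta,\varepsilon,\tilde\mu)$ be a commutative Frobenius object in $\mathbf{Rel}$. If $\eta\cap\varepsilon \neq \emptyset$, then its partition function satisfies $Z(\Sigma_g) = T$ for all integers $g \ge 0$.
   Context: $\mathbf{Rel}$ is the symmetric monoidal category whose objects are sets, whose morphisms $X \to Y$ are relations $R \subseteq X \times Y$, composed by $S\circ R = \{(x,z) : \exists y,\ (x,y)\in R,\ (y,z)\in S\}$, with identity the diagonal, monoidal product the Cartesian product, and unit the one-point set $\{\bullet\}$. A relation $R \subseteq X\times Y$ is identified with the map $\tilde R: X \to \mathcal{P}(Y)$, $\tilde R(x) = \{y : (x,y)\in R\}$. A Frobenius object in $\mathbf{Rel}$ is a set $X$ with a unit $\eta \subseteq X$ (a relation $\{\bullet\}\to X$), a counit $\varepsilon \subseteq X$ (a relation $X \to \{\bullet\}$), and a multiplication $\mu \subseteq X\times X\times X$ (a relation $X\times X \to X$, with map $\tilde\mu$) satisfying unitality $\mu\circ(\mathbf{1}\times\eta)=\mu\circ(\eta\times\mathbf{1})=\mathbf{1}$, associativity $\mu\circ(\mathbf{1}\times\mu)=\mu\circ(\mu\times\mathbf{1})$, and nondegeneracy: there is a relation $\beta:\{\bullet\}\to X\times X$ with $(\varepsilon\times\mathbf{1})\circ(\mu\times\mathbf{1})\circ(\mathbf{1}\times\beta) = (\mathbf{1}\times\varepsilon)\circ(\mathbf{1}\times\mu)\circ(\beta\times\mathbf{1}) = \mathbf{1}$ (such $\beta$ is unique). The comultiplication is $\delta = (\mathbf{1}\times\mu)\circ(\beta\times\mathbf{1})$.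 It is commutative if $\tilde\mu(x,y)=\tilde\mu(y,x)$ for all $x,y$. The partition function on the closed orientable genus-$g$ surface is $Z(\Sigma_g) = \varepsilon\circ(\mu\circ\delta)^g\circ\eta \in \{\emptyset,\{\bullet\}\}$, with $\emptyset$ read as $F$ and $\{\bullet\}$ as $T$. *)

theory Defs
  imports Main
begin

text \<open>The category Rel: a morphism X \<rightarrow> Y is a relation ('x \<times> 'y) set.
  Objects (sets) are represented by types; the unit object is the type unit.\<close>

definition rcomp :: "('b \<times> 'c) set \<Rightarrow> ('a \<times> 'b) set \<Rightarrow> ('a \<times> 'c) set" (infixr "\<circ>\<^sub>R" 55)
  where "S \<circ>\<^sub>R R = R O S"

definition rtensor :: "('a \<times> 'b) set \<Rightarrow> ('c \<times> 'd) set \<Rightarrow> (('a \<times> 'c) \<times> ('b \<times> 'd)) set" (infixr "\<otimes>\<^sub>R" 70)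
  where "R \<otimes>\<^sub>R S = {((a, c), (b, d)) | a b c d. (a, b) \<in> R \<and> (c, d) \<in> S}"

definition lunitor :: "((unit \<times> 'a) \<times> 'a) set" where "lunitor = {(((), x), x) | x. True}"
definition runitor :: "(('a \<times> unit) \<times> 'a) set" where "runitor = {((x, ()), x) | x. True}"
definition associator :: "((('a \<times> 'b) \<times> 'c) \<times> ('a \<times> ('b \<times> 'c))) set"
  where "associator = {(((a, b), c), (a, (b, c))) | a b c. True}"

definition unit_rel :: "'a set \<Rightarrow> (unit \<times> 'a) set" where "unit_rel \<eta> = {((), x) | x. x \<in> \<eta>}"
definition counit_rel :: "'a set \<Rightarrow> ('a \<times> unit) set" where "counit_rel \<epsilon> = {(x, ()) | x. x \<in> \<epsilon>}"
definition mult_rel :: "('a \<Rightarrow> 'a \<Rightarrow> 'a set) \<Rightarrow> (('a \<times> 'a) \<times> 'a) set"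
  where "mult_rel \<mu> = {((x, y), z) | x y z. z \<in> \<mu> x y}"

definition unital :: "'a set \<Rightarrow> ('a \<Rightarrow> 'a \<Rightarrow> 'a set) \<Rightarrow> bool" where
  "unital \<eta> \<mu> \<longleftrightarrow>
     mult_rel \<mu> \<circ>\<^sub>R (Id \<otimes>\<^sub>R unit_rel \<eta>) \<circ>\<^sub>R converse runitor = Id \<and>
     mult_rel \<mu> \<circ>\<^sub>R (unit_rel \<eta> \<otimes>\<^sub>R Id) \<circ>\<^sub>R converse lunitor = Id"

definition associative_rel :: "('a \<Rightarrow> 'a \<Rightarrow> 'a set) \<Rightarrow> bool" where
  "associative_rel \<mu> \<longleftrightarrow>
     mult_rel \<mu> \<circ>\<^sub>R (Id \<otimes>\<^sub>R mult_rel \<mu>) \<circ>\<^sub>R associator = mult_rel \<mu> \<circ>\<^sub>R (mult_rel \<mu> \<otimes>\<^sub>R Id)"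

text \<open>beta : {*} \<rightarrow> X \<times> X witnesses nondegeneracy (snake equations).\<close>
definition nondeg_witness :: "'a set \<Rightarrow> ('a \<Rightarrow> 'a \<Rightarrow> 'a set) \<Rightarrow> (unit \<times> ('a \<times> 'a)) set \<Rightarrow> bool" where
  "nondeg_witness \<epsilon> \<mu> \<beta> \<longleftrightarrow>
     lunitor \<circ>\<^sub>R (counit_rel \<epsilon> \<otimes>\<^sub>R Id) \<circ>\<^sub>R (mult_rel \<mu> \<otimes>\<^sub>R Id) \<circ>\<^sub>R converse associator
        \<circ>\<^sub>R (Id \<otimes>\<^sub>R \<beta>) \<circ>\<^sub>R converse runitor = Id \<and>
     runitor \<circ>\<^sub>R (Id \<otimes>\<^sub>R counit_rel \<epsilon>) \<circ>\<^sub>R (Id \<otimes>\<^sub>R mult_rel \<mu>) \<circ>\<^sub>R associator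
        \<circ>\<^sub>R (\<beta> \<otimes>\<^sub>R Id) \<circ>\<^sub>R converse lunitor = Id"

definition frobenius_rel :: "'a set \<Rightarrow> 'a set \<Rightarrow> ('a \<Rightarrow> 'a \<Rightarrow> 'a set) \<Rightarrow> bool" where
  "frobenius_rel \<eta> \<epsilon> \<mu> \<longleftrightarrow> unital \<eta> \<mu> \<and> associative_rel \<mu> \<and> (\<exists>\<beta>. nondeg_witness \<epsilon> \<mu> \<beta>)"

definition commutative_rel :: "('a \<Rightarrow> 'a \<Rightarrow> 'a set) \<Rightarrow> bool" where
  "commutative_rel \<mu> \<longleftrightarrow> (\<forall>x y. \<mu> x y = \<mu> y x)"

text \<open>The (unique) beta and the comultiplication delta = (1 x mu) o (beta x 1).\<close>
definition frob_beta :: "'a set \<Rightarrow> ('a \<Rightarrow> 'a \<Rightarrow> 'a set) \<Rightarrow> (unit \<times> ('a \<times> 'a)) set" where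
  "frob_beta \<epsilon> \<mu> = (THE \<beta>. nondeg_witness \<epsilon> \<mu> \<beta>)"

definition comult_rel :: "'a set \<Rightarrow> ('a \<Rightarrow> 'a \<Rightarrow> 'a set) \<Rightarrow> ('a \<times> ('a \<times> 'a)) set" where
  "comult_rel \<epsilon> \<mu> = (Id \<otimes>\<^sub>R mult_rel \<mu>) \<circ>\<^sub>R associator \<circ>\<^sub>R (frob_beta \<epsilon> \<mu> \<otimes>\<^sub>R Id) \<circ>\<^sub>R converse lunitor"

text \<open>Partition function on the genus-g surface: eps o (mu o delta)^g o eta, a relation unit \<rightarrow> unit.\<close>
definition partition_fn :: "'a set \<Rightarrow> 'a set \<Rightarrow> ('a \<Rightarrow> 'a \<Rightarrow> 'a set) \<Rightarrow> nat \<Rightarrow> (unit \<times> unit) set" where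
  "partition_fn \<eta> \<epsilon> \<mu> g = counit_rel \<epsilon> \<circ>\<^sub>R ((mult_rel \<mu> \<circ>\<^sub>R comult_rel \<epsilon> \<mu>) ^^ g) \<circ>\<^sub>R unit_rel \<eta>"

text \<open>Truth value T is the full relation {(*,*)}; F is the empty relation.\<close>
definition relT :: "(unit \<times> unit) set" where "relT = {((), ())}"

end

theory Submission
  imports Defs
begin

text \<open>A point \<open>e \<in> \<eta> \<inter> \<epsilon>\<close> is idempotent, \<open>e \<in> e\<cdot>e\<close>, by unitality. The two snake
  equations then force \<open>(e, e) \<in> \<beta>\<close>, so \<open>\<delta>\<close> relates \<open>e\<close> to \<open>(e, e)\<close> and the handle
  operator \<open>\<mu> \<circ> \<delta>\<close> relates \<open>e\<close> to itself. Following \<open>e\<close> from \<open>\<eta>\<close> through \<open>g\<close> handles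
  into \<open>\<epsilon>\<close> shows \<open>Z(\<Sigma>\<^sub>g) = T\<close>.\<close>

lemma mem_right_unit_law_iff:
  "(x, y) \<in> mult_rel \<mu> \<circ>\<^sub>R (Id \<otimes>\<^sub>R unit_rel \<eta>) \<circ>\<^sub>R converse runitor \<longleftrightarrow> (\<exists>e\<in>\<eta>. y \<in> \<mu> x e)"
  unfolding rcomp_def rtensor_def runitor_def unit_rel_def mult_rel_def
  by (simp add: relcomp_unfold) fastforce

lemma mem_left_unit_law_iff:
  "(x, y) \<in> mult_rel \<mu> \<circ>\<^sub>R (unit_rel \<eta> \<otimes>\<^sub>R Id) \<circ>\<^sub>R converse lunitor \<longleftrightarrow> (\<exists>e\<in>\<eta>. y \<in> \<mu> e x)"
  unfolding rcomp_def rtensor_def lunitor_def unit_rel_def mult_rel_def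
  by (simp add: relcomp_unfold) fastforce

lemma mem_left_snake_iff:
  "(x, v) \<in> lunitor \<circ>\<^sub>R (counit_rel \<epsilon> \<otimes>\<^sub>R Id) \<circ>\<^sub>R (mult_rel \<mu> \<otimes>\<^sub>R Id) \<circ>\<^sub>R converse associator
        \<circ>\<^sub>R (Id \<otimes>\<^sub>R \<beta>) \<circ>\<^sub>R converse runitor
   \<longleftrightarrow> (\<exists>u. ((), (u, v)) \<in> \<beta> \<and> \<mu> x u \<inter> \<epsilon> \<noteq> {})"
  unfolding rcomp_def rtensor_def lunitor_def runitor_def associator_def counit_rel_def mult_rel_def
  by (simp add: relcomp_unfold) fastforce

lemma mem_right_snake_iff:
  "(x, u) \<in> runitor \<circ>\<^sub>R (Id \<otimes>\<^sub>R counit_rel \<epsilon>) \<circ>\<^sub>R (Id \<otimes>\<^sub>R mult_rel \<mu>) \<circ>\<^sub>R associator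
        \<circ>\<^sub>R (\<beta> \<otimes>\<^sub>R Id) \<circ>\<^sub>R converse lunitor
   \<longleftrightarrow> (\<exists>v. ((), (u, v)) \<in> \<beta> \<and> \<mu> v x \<inter> \<epsilon> \<noteq> {})"
  unfolding rcomp_def rtensor_def lunitor_def runitor_def associator_def counit_rel_def mult_rel_def
  by (simp add: relcomp_unfold) fastforce

lemma mem_comult_rel_iff:
  "(x, (a, b)) \<in> comult_rel \<epsilon> \<mu> \<longleftrightarrow> (\<exists>v. ((), (a, v)) \<in> frob_beta \<epsilon> \<mu> \<and> b \<in> \<mu> v x)"
  unfolding comult_rel_def rcomp_def rtensor_def lunitor_def associator_def mult_rel_def
  by (auto simp: relcomp_unfold)

lemma unital_idempotent:
  assumes "unital \<eta> \<mu>" and "e \<in> \<eta>"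
  shows "e \<in> \<mu> e e"
proof -
  from assms(1) obtain e' where "e' \<in> \<eta>" and e: "e \<in> \<mu> e' e"
    unfolding unital_def by (metis IdI mem_left_unit_law_iff)
  from assms have "\<forall>y. (\<exists>e''\<in>\<eta>. y \<in> \<mu> e' e'') \<longleftrightarrow> y = e'"
    unfolding unital_def by (metis pair_in_Id_conv mem_right_unit_law_iff)
  with assms(2) e have "e = e'" by blast
  with e show ?thesis by simp
qed

lemma nondeg_witness_left_snake:
  assumes "nondeg_witness \<epsilon> \<mu> \<beta>"
  shows "(\<exists>u. ((), (u, v)) \<in> \<beta> \<and> \<mu> x u \<inter> \<epsilon> \<noteq> {}) \<longleftrightarrow> v = x"
  using assms unfolding nondeg_witness_def
  by (metis pair_in_Id_conv mem_left_snake_iff)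

lemma nondeg_witness_right_snake:
  assumes "nondeg_witness \<epsilon> \<mu> \<beta>"
  shows "(\<exists>v. ((), (u, v)) \<in> \<beta> \<and> \<mu> v x \<inter> \<epsilon> \<noteq> {}) \<longleftrightarrow> u = x"
  using assms unfolding nondeg_witness_def
  by (metis pair_in_Id_conv mem_right_snake_iff)

lemma nondeg_witness_unique:
  assumes "nondeg_witness \<epsilon> \<mu> \<beta>\<^sub>1" and "nondeg_witness \<epsilon> \<mu> \<beta>\<^sub>2"
  shows "\<beta>\<^sub>1 \<subseteq> \<beta>\<^sub>2"
proof
  fix p assume "p \<in> \<beta>\<^sub>1"
  then obtain a b where p: "p = ((), (a, b))" and ab: "((), (a, b)) \<in> \<beta>\<^sub>1"
    by (metis old.unit.exhaust prod.collapse)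
  obtain v where av: "((), (a, v)) \<in> \<beta>\<^sub>2" and va: "\<mu> v a \<inter> \<epsilon> \<noteq> {}"
    using nondeg_witness_right_snake[OF assms(2), of a a] by blast
  have "v = b"
    using nondeg_witness_left_snake[OF assms(1), of b v] ab va by blast
  with av p show "p \<in> \<beta>\<^sub>2" by simp
qed

lemma frob_beta_eq:
  assumes "nondeg_witness \<epsilon> \<mu> \<beta>"
  shows "frob_beta \<epsilon> \<mu> = \<beta>"
  unfolding frob_beta_def
  by (rule the_equality) (use assms nondeg_witness_unique in \<open>blast intro: subset_antisym\<close>)+

lemma nondeg_witness_diagonal:
  assumes "nondeg_witness \<epsilon> \<mu> \<beta>" and "e \<in> \<mu> e e" and "e \<in> \<epsilon>"
  shows "((), (e, e)) \<in> \<beta>"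
proof -
  obtain u where ue: "((), (u, e)) \<in> \<beta>"
    using nondeg_witness_left_snake[OF assms(1), of e e] by blast
  have "u = e"
    using nondeg_witness_right_snake[OF assms(1), of u e] ue assms(2,3) by blast
  with ue show ?thesis by simp
qed

lemma relpow_fixed_point:
  assumes "(x, x) \<in> R"
  shows "(x, x) \<in> R ^^ n"
  by (induction n) (auto intro: relpow_Suc_I assms)

lemma unit_unit_rel_eq_relT:
  fixes R :: "(unit \<times> unit) set"
  assumes "((), ()) \<in> R"
  shows "R = relT"
  using assms unfolding relT_def by auto

theorem lemma4p2:
  fixes \<eta> \<epsilon> :: "'a set" and \<mu> :: "'a \<Rightarrow> 'a \<Rightarrow> 'a set"
  assumes "frobenius_rel \<eta> \<epsilon> \<mu>"
    and "commutative_rel \<mu>"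
    and "\<eta> \<inter> \<epsilon> \<noteq> {}"
  shows "\<forall>g::nat. partition_fn \<eta> \<epsilon> \<mu> g = relT"
proof
  fix g :: nat
  obtain e where "e \<in> \<eta>" and "e \<in> \<epsilon>" using assms(3) by blast
  obtain \<beta> where nd: "nondeg_witness \<epsilon> \<mu> \<beta>" and "unital \<eta> \<mu>"
    using assms(1) unfolding frobenius_rel_def by blast
  have ee: "e \<in> \<mu> e e" using \<open>unital \<eta> \<mu>\<close> \<open>e \<in> \<eta>\<close> by (rule unital_idempotent)
  have "((), (e, e)) \<in> frob_beta \<epsilon> \<mu>"
    unfolding frob_beta_eq[OF nd] using nd ee \<open>e \<in> \<epsilon>\<close> by (rule nondeg_witness_diagonal)
  then have "(e, (e, e)) \<in> comult_rel \<epsilon> \<mu>"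
    unfolding mem_comult_rel_iff using ee by blast
  moreover have "((e, e), e) \<in> mult_rel \<mu>"
    using ee unfolding mult_rel_def by simp
  ultimately have "(e, e) \<in> mult_rel \<mu> \<circ>\<^sub>R comult_rel \<epsilon> \<mu>"
    unfolding rcomp_def by (rule relcompI)
  then have handles: "(e, e) \<in> (mult_rel \<mu> \<circ>\<^sub>R comult_rel \<epsilon> \<mu>) ^^ g"
    by (rule relpow_fixed_point)
  have "((), e) \<in> unit_rel \<eta>" and "(e, ()) \<in> counit_rel \<epsilon>"
    using \<open>e \<in> \<eta>\<close> \<open>e \<in> \<epsilon>\<close> unfolding unit_rel_def counit_rel_def by simp_all
  with handles have "((), ()) \<in> partition_fn \<eta> \<epsilon> \<mu> g"
    unfolding partition_fn_def rcomp_def by (intro relcompI)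
  then show "partition_fn \<eta> \<epsilon> \<mu> g = relT"
    by (rule unit_unit_rel_eq_relT)
qed

end
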